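(* Let $\mathbb{F}$ be a field of characteristic not $2$, $\alpha\in\mathbb{F}\setminus\{0,1\}$, and suppose $\mathbb{F}$ contains a root $\zeta$ of $x^2-(4\alpha-2)x+1$. In $\mathfrak{J}(\alpha)$ let $\mu=-\frac{1+\zeta}{4}$, $\nu=-\frac{1+\zeta^{-1}}{4}$, $\mathfrak{s}=\frac{1}{4(\alpha-1)}(\mu\mathfrak{a}+\mathfrak{a}\mathfrak{b}+\nu\mathfrak{b})$, $\mathfrak{t}=\frac{1}{\alpha(\alpha-1)}(\nu\mathfrak{a}+\mathfrak{a}\mathfrak{b}+\mu\mathfrak{b})$, and $1_{\mathfrak{J}}=\frac{2}{\alpha-1}\sigma$. If $\mathfrak{d}=\xi\mathfrak{s}+\frac12 1_{\mathfrak{J}}+\xi^{-1}\mathfrak{t}$, for some $0\neq\xi\in\mathbb{F}$, is a primitive axis of Jordan type half of $\mathfrak{J}(\alpha)$, then $\mathfrak{s}^{\tau_{\mathfrak{d}}}=\xi^{-2}\mathfrak{t}$ and $\mathfrak{t}^{\tau_{\mathfrak{d}}}=\xi^{2}\mathfrak{s}$.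
   Context: $\mathfrak{J}(\alpha)$ is the commutative algebra with basis $\mathfrak{a},\mathfrak{b},\sigma$ and product $\mathfrak{a}^2=\mathfrak{a}$, $\mathfrak{b}^2=\mathfrak{b}$, $\mathfrak{a}\mathfrak{b}=\frac12\mathfrak{a}+\frac12\mathfrak{b}+\sigma$, $\mathfrak{a}\sigma=\frac{\alpha-1}{2}\mathfrak{a}$, $\mathfrak{b}\sigma=\frac{\alpha-1}{2}\mathfrak{b}$, $\sigma^2=\frac{\alpha-1}{2}\sigma$; $1_{\mathfrak{J}}$ is its identity. Its Frobenius form has Gram matrix, in the basis $\mathfrak{a},\mathfrak{b},\sigma$: $(\mathfrak{a},\mathfrak{a})=(\mathfrak{b},\mathfrak{b})=1$, $(\mathfrak{a},\mathfrak{b})=\alpha$, $(\mathfrak{a},\sigma)=(\mathfrak{b},\sigma)=\frac{\alpha-1}{2}$, $(\sigma,\sigma)=\frac{(\alpha-1)^2}{2}$. For $x$ in an algebra $J$, $J_\lambda(x)=\{u:xu=\lambda u\}$; a primitive axis of Jordan type half is $x\neq0$, $x^2=x$, $J=J_1(x)\oplus J_0(x)\oplus J_{1/2}(x)$, $J_1(x)=\mathbb{F}x$, with fusion rules $J_1J_1\subseteq J_1$, $J_1J_0=0$, $J_0J_0\subseteq J_0$, $J_1J_{1/2},J_0J_{1/2}\subseteq J_{1/2}$, $J_{1/2}J_{1/2}\subseteq J_1\oplus J_0$. The Miyamoto involution $\tau_x$ is the automorphism acting as identity on $J_1(x)\oplus J_0(x)$ and $-1$ on $J_{1/2}(x)$.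 *)

theory Defs
  imports Main "HOL-Library.Product_Plus"
begin

text \<open>Elements of the 3-dimensional algebra J(alpha) are coordinate triples
  (coefficients of a, b, sigma) over a field 'a.\<close>

type_synonym 'a trip = "'a \<times> 'a \<times> 'a"

definition smul :: "'a::field \<Rightarrow> 'a trip \<Rightarrow> 'a trip" where
  "smul c v = (c * fst v, c * fst (snd v), c * snd (snd v))"

definition ja :: "'a::field trip" where "ja = (1, 0, 0)"
definition jb :: "'a::field trip" where "jb = (0, 1, 0)"
definition jsig :: "'a::field trip" where "jsig = (0, 0, 1)"

text \<open>Bilinear extension of: a a = a, b b = b, a b = a/2 + b/2 + sigma,
  a sigma = (alpha-1)/2 a, b sigma = (alpha-1)/2 b, sigma sigma = (alpha-1)/2 sigma.\<close>
definition jmult :: "'a::field \<Rightarrow> 'a trip \<Rightarrow> 'a trip \<Rightarrow> 'a trip" where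
  "jmult \<alpha> x y =
    (let x1 = fst x; x2 = fst (snd x); x3 = snd (snd x);
         y1 = fst y; y2 = fst (snd y); y3 = snd (snd y);
         c = (\<alpha> - 1) / 2
     in ( x1*y1 + (x1*y2 + x2*y1)/2 + c*(x1*y3 + x3*y1),
          x2*y2 + (x1*y2 + x2*y1)/2 + c*(x2*y3 + x3*y2),
          (x1*y2 + x2*y1) + c*(x3*y3)))"

definition jone :: "'a::field \<Rightarrow> 'a trip" where
  "jone \<alpha> = smul (2 / (\<alpha> - 1)) jsig"

definition eigsp :: "('v \<Rightarrow> 'v \<Rightarrow> 'v) \<Rightarrow> ('a \<Rightarrow> 'v \<Rightarrow> 'v) \<Rightarrow> 'v \<Rightarrow> 'a \<Rightarrow> 'v set" where
  "eigsp M S x lam = {u. M x u = S lam u}"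

definition primitive_axis_half ::
  "('v::ab_group_add \<Rightarrow> 'v \<Rightarrow> 'v) \<Rightarrow> ('a::field \<Rightarrow> 'v \<Rightarrow> 'v) \<Rightarrow> 'v \<Rightarrow> bool" where
  "primitive_axis_half M S x \<longleftrightarrow>
     (let E1 = eigsp M S x 1; E0 = eigsp M S x 0; Eh = eigsp M S x (1/2) in
       x \<noteq> 0 \<and> M x x = x \<and>
       \<comment> \<open>J = J_1 (+) J_0 (+) J_1/2 (direct sum)\<close>
       (\<forall>u. \<exists>u1 u0 uh. u1 \<in> E1 \<and> u0 \<in> E0 \<and> uh \<in> Eh \<and> u = u1 + u0 + uh) \<and>
       (\<forall>u1 u0 uh v1 v0 vh. u1 \<in> E1 \<and> u0 \<in> E0 \<and> uh \<in> Eh \<and>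
           v1 \<in> E1 \<and> v0 \<in> E0 \<and> vh \<in> Eh \<and> u1 + u0 + uh = v1 + v0 + vh
           \<longrightarrow> u1 = v1 \<and> u0 = v0 \<and> uh = vh) \<and>
       E1 = range (\<lambda>c. S c x) \<and>
       \<comment> \<open>fusion rules\<close>
       (\<forall>u\<in>E1. \<forall>v\<in>E1. M u v \<in> E1) \<and>
       (\<forall>u\<in>E1. \<forall>v\<in>E0. M u v = 0) \<and>
       (\<forall>u\<in>E0. \<forall>v\<in>E0. M u v \<in> E0) \<and>
       (\<forall>u\<in>E1. \<forall>v\<in>Eh. M u v \<in> Eh) \<and>
       (\<forall>u\<in>E0. \<forall>v\<in>Eh. M u v \<in> Eh) \<and>
       (\<forall>u\<in>Eh. \<forall>v\<in>Eh. \<exists>w1\<in>E1. \<exists>w0\<in>E0. M u v = w1 + w0))"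

definition miyamoto ::
  "('v::ab_group_add \<Rightarrow> 'v \<Rightarrow> 'v) \<Rightarrow> ('a::field \<Rightarrow> 'v \<Rightarrow> 'v) \<Rightarrow> 'v \<Rightarrow> 'v \<Rightarrow> 'v" where
  "miyamoto M S x u =
     (THE w. \<exists>u1 u0 uh. u1 \<in> eigsp M S x 1 \<and> u0 \<in> eigsp M S x 0 \<and>
        uh \<in> eigsp M S x (1/2) \<and> u = u1 + u0 + uh \<and> w = u1 + u0 - uh)"

end

theory Submission
  imports Defs
begin

(* The elements s and t square to zero (this is where zeta + 1/zeta = 4 alpha - 2 enters), and
  1_J is the identity. Hence d = 1/2 1_J + xi s + 1/xi t has the eigenvectors d for 1, 1_J - d
  for 0, and h = xi s - 1/xi t for 1/2: the cross terms 1/xi st in ds and xi st in dt cancel in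
  dh. Since xi s = 1/4 (d - (1_J - d)) + 1/2 h, the Miyamoto involution maps xi s to
  1/4 (d - (1_J - d)) - 1/2 h = 1/xi t, and symmetrically 1/xi t to xi s. *)

lemma miyamoto_eq:
  assumes axis: "primitive_axis_half M S x"
    and u1: "u1 \<in> eigsp M S x 1" and u0: "u0 \<in> eigsp M S x 0"
    and uh: "uh \<in> eigsp M S x (1/2)"
  shows "miyamoto M S x (u1 + u0 + uh) = u1 + u0 - uh"
  unfolding miyamoto_def
proof (rule the_equality)
  show "\<exists>v1 v0 vh. v1 \<in> eigsp M S x 1 \<and> v0 \<in> eigsp M S x 0 \<and> vh \<in> eigsp M S x (1/2) \<and>
          u1 + u0 + uh = v1 + v0 + vh \<and> u1 + u0 - uh = v1 + v0 - vh"
    using u1 u0 uh by blast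
next
  fix w
  assume "\<exists>v1 v0 vh. v1 \<in> eigsp M S x 1 \<and> v0 \<in> eigsp M S x 0 \<and> vh \<in> eigsp M S x (1/2) \<and>
          u1 + u0 + uh = v1 + v0 + vh \<and> w = v1 + v0 - vh"
  then obtain v1 v0 vh where v: "v1 \<in> eigsp M S x 1" "v0 \<in> eigsp M S x 0"
      "vh \<in> eigsp M S x (1/2)" "u1 + u0 + uh = v1 + v0 + vh" and w: "w = v1 + v0 - vh"
    by blast
  have "u1 = v1 \<and> u0 = v0 \<and> uh = vh"
    using axis u1 u0 uh v unfolding primitive_axis_half_def Let_def by blast
  then show "w = u1 + u0 - uh" using w by simp
qed

lemma smul_smul: "smul a (smul b u) = smul (a * b) u"
  by (simp add: smul_def)

lemma smul_zero_right [simp]: "smul c 0 = 0"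
  by (simp add: smul_def zero_prod_def)

lemma jmult_commute: "jmult \<alpha> x y = jmult \<alpha> y x"
  by (cases x; cases y) (simp add: jmult_def Let_def algebra_simps)

lemma jmult_add_right: "jmult \<alpha> x (u + v) = jmult \<alpha> x u + jmult \<alpha> x v"
  by (cases x; cases u; cases v) (simp add: jmult_def Let_def add_divide_distrib[symmetric] algebra_simps)

lemma jmult_add_left: "jmult \<alpha> (u + v) x = jmult \<alpha> u x + jmult \<alpha> v x"
  by (metis jmult_add_right jmult_commute)

lemma jmult_diff_right: "jmult \<alpha> x (u - v) = jmult \<alpha> x u - jmult \<alpha> x v"
  by (metis add_diff_cancel jmult_add_right diff_add_cancel)

lemma jmult_smul_right: "jmult \<alpha> x (smul c u) = smul c (jmult \<alpha> x u)"
  by (cases x; cases u) (simp add: jmult_def smul_def Let_def times_divide_eq_right[symmetric] algebra_simps)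

lemma jmult_smul_left: "jmult \<alpha> (smul c u) x = smul c (jmult \<alpha> u x)"
  by (metis jmult_smul_right jmult_commute)

lemma jmult_smul_self_eq_zero: "jmult \<alpha> u u = 0 \<Longrightarrow> jmult \<alpha> (smul c u) (smul c u) = 0"
  by (simp add: jmult_smul_left jmult_smul_right)

lemma jmult_jone_left:
  fixes \<alpha> :: "'a::field"
  assumes "(2::'a) \<noteq> 0" "\<alpha> \<noteq> 1"
  shows "jmult \<alpha> (jone \<alpha>) u = u"
  using assms by (cases u) (simp add: jmult_def jone_def smul_def jsig_def Let_def)

lemma jmult_jone_right:
  fixes \<alpha> :: "'a::field"
  assumes "(2::'a) \<noteq> 0" "\<alpha> \<noteq> 1"
  shows "jmult \<alpha> u (jone \<alpha>) = u"
  using jmult_jone_left[OF assms] jmult_commute by metis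

lemma eigsp_smul: "u \<in> eigsp (jmult \<alpha>) smul x l \<Longrightarrow> smul c u \<in> eigsp (jmult \<alpha>) smul x l"
  by (simp add: eigsp_def jmult_smul_right smul_smul mult.commute)

lemma numeral_Bit0_nonzero:
  "(2::'a::field) \<noteq> 0 \<Longrightarrow> (numeral k::'a) \<noteq> 0 \<Longrightarrow> (numeral (Num.Bit0 k)::'a) \<noteq> 0"
  by (metis mult_2 mult_eq_0_iff numeral_Bit0)

lemma jmult_self_eq_zero:
  fixes \<alpha> p q r :: "'a::field"
  assumes two: "(2::'a) \<noteq> 0"
    and "p + q + (\<alpha> - 1) * r = 0" and "2 * p * q + (\<alpha> - 1) / 2 * r^2 = 0"
  shows "jmult \<alpha> (p, q, r) (p, q, r) = 0"
proof -
  have "jmult \<alpha> (p, q, r) (p, q, r) =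
      (p * (p + q + (\<alpha> - 1) * r), q * (p + q + (\<alpha> - 1) * r), 2 * p * q + (\<alpha> - 1) / 2 * r^2)"
    using two by (simp add: jmult_def field_simps power2_eq_square numeral_Bit0_nonzero)
  then show ?thesis
    using assms by (simp add: zero_prod_def)
qed

lemma quadratic_root_add_inverse:
  fixes \<alpha> \<zeta> :: "'a::field"
  assumes "\<zeta>^2 - (4 * \<alpha> - 2) * \<zeta> + 1 = 0"
  shows "\<zeta> \<noteq> 0" and "\<zeta> + inverse \<zeta> = 4 * \<alpha> - 2"
proof -
  show nz: "\<zeta> \<noteq> 0" using assms by auto
  have "\<zeta> * (\<zeta> + inverse \<zeta>) = \<zeta> * (4 * \<alpha> - 2)"
    using assms nz by (simp add: algebra_simps power2_eq_square)
  then show "\<zeta> + inverse \<zeta> = 4 * \<alpha> - 2" using nz by simp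
qed

lemma jmult_ja_jb: "jmult \<alpha> ja jb = (1/2, 1/2, 1)"
  by (simp add: jmult_def ja_def jb_def)

lemma jmult_self_eq_zero_of_root:
  fixes \<alpha> \<zeta> :: "'a::field"
  assumes two: "(2::'a) \<noteq> 0" and nz: "\<zeta> \<noteq> 0" and \<zeta>: "\<zeta> + inverse \<zeta> = 4 * \<alpha> - 2"
  defines "w \<equiv> smul (- (1 + \<zeta>) / 4) ja + jmult \<alpha> ja jb + smul (- (1 + inverse \<zeta>) / 4) jb"
  shows "jmult \<alpha> w w = 0"
proof -
  have quarter: "- (1 + x) / 4 + 1 / 2 = (1 - x) / 4" for x :: 'a
    using two by (simp add: field_simps numeral_Bit0_nonzero)
  have "w = (- (1 + \<zeta>) / 4 + 1 / 2, 1 / 2 + - (1 + inverse \<zeta>) / 4, 1)"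
    unfolding w_def jmult_ja_jb by (simp add: smul_def ja_def jb_def del: minus_divide_left)
  then have w: "w = ((1 - \<zeta>) / 4, (1 - inverse \<zeta>) / 4, 1)"
    by (simp only: quarter add.commute[of "1 / 2"])
  have "(1 - \<zeta>) / 4 + (1 - inverse \<zeta>) / 4 = (2 - (\<zeta> + inverse \<zeta>)) / 4"
    by (simp add: diff_divide_distrib add_divide_distrib)
  also have "\<dots> = 1 - \<alpha>"
    unfolding \<zeta> using two by (simp add: field_simps numeral_Bit0_nonzero)
  finally have sum: "(1 - \<zeta>) / 4 + (1 - inverse \<zeta>) / 4 = 1 - \<alpha>" .
  have "2 * ((1 - \<zeta>) / 4) * ((1 - inverse \<zeta>) / 4) = (2 - (\<zeta> + inverse \<zeta>)) / 8"
    using nz two by (simp add: field_simps numeral_Bit0_nonzero)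
  also have "\<dots> = (1 - \<alpha>) / 2"
    unfolding \<zeta> using two by (simp add: field_simps numeral_Bit0_nonzero)
  finally have prod: "2 * ((1 - \<zeta>) / 4) * ((1 - inverse \<zeta>) / 4) = (1 - \<alpha>) / 2" .
  show ?thesis unfolding w
    by (rule jmult_self_eq_zero[OF two]; simp only: sum prod mult_1_right power_one)
       (simp_all add: diff_divide_distrib)
qed

lemma miyamoto_square_zero_pair:
  fixes \<alpha> \<xi> :: "'a::field"
  assumes two: "(2::'a) \<noteq> 0" and \<alpha>: "\<alpha> \<noteq> 1" and \<xi>: "\<xi> \<noteq> 0"
    and s: "jmult \<alpha> s s = 0" and t: "jmult \<alpha> t t = 0"
    and d: "d = smul \<xi> s + smul (1/2) (jone \<alpha>) + smul (inverse \<xi>) t"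
    and axis: "primitive_axis_half (jmult \<alpha>) smul d"
  shows "miyamoto (jmult \<alpha>) smul d s = smul (inverse \<xi> ^ 2) t"
proof -
  let ?E = "eigsp (jmult \<alpha>) smul d"
  define e where "e = jone \<alpha> - d"
  define h where "h = smul \<xi> s - smul (inverse \<xi>) t"
  have "jmult \<alpha> d d = d"
    using axis by (simp add: primitive_axis_half_def Let_def)
  then have d1: "d \<in> ?E 1" and e0: "e \<in> ?E 0"
    by (simp_all add: eigsp_def e_def jmult_diff_right jmult_jone_right[OF two \<alpha>] smul_def zero_prod_def)
  have ds: "jmult \<alpha> d s = smul (1/2) s + smul (inverse \<xi>) (jmult \<alpha> s t)"
    and dt: "jmult \<alpha> d t = smul \<xi> (jmult \<alpha> s t) + smul (1/2) t"
    by (simp_all add: d s t jmult_add_left jmult_smul_left jmult_jone_left[OF two \<alpha>] jmult_commute[of _ t s])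
  have "jmult \<alpha> d h = smul \<xi> (jmult \<alpha> d s) - smul (inverse \<xi>) (jmult \<alpha> d t)"
    by (simp add: h_def jmult_diff_right jmult_smul_right)
  also have "\<dots> = smul (1/2) h"
    unfolding ds dt h_def using \<xi>
    by (cases s; cases t; cases "jmult \<alpha> s t") (simp add: smul_def field_simps)
  finally have h: "h \<in> ?E (1/2)"
    by (simp add: eigsp_def)
  have "s = smul (1 / (4 * \<xi>)) d + smul (- 1 / (4 * \<xi>)) e + smul (1 / (2 * \<xi>)) h"
    and "smul (1 / (4 * \<xi>)) d + smul (- 1 / (4 * \<xi>)) e - smul (1 / (2 * \<xi>)) h = smul (inverse \<xi> ^ 2) t"
    using \<xi> two unfolding d e_def h_def
    by (cases s; cases t; cases "jone \<alpha>";
        simp add: smul_def field_simps power2_eq_square numeral_Bit0_nonzero)+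
  then show ?thesis
    using miyamoto_eq[OF axis eigsp_smul[OF d1] eigsp_smul[OF e0] eigsp_smul[OF h]] by simp
qed

theorem lemma3p9:
  fixes \<alpha> \<zeta> \<xi> :: "'a::field"
  assumes char: "(2::'a) \<noteq> 0"
    and a0: "\<alpha> \<noteq> 0" and a1: "\<alpha> \<noteq> 1"
    and root: "\<zeta>^2 - (4*\<alpha> - 2) * \<zeta> + 1 = 0"
    and xi: "\<xi> \<noteq> 0"
    and axis: "let \<mu> = - (1 + \<zeta>) / 4; \<nu> = - (1 + inverse \<zeta>) / 4;
                   s = smul (1 / (4 * (\<alpha> - 1)))
                         (smul \<mu> ja + jmult \<alpha> ja jb + smul \<nu> jb);
                   t = smul (1 / (\<alpha> * (\<alpha> - 1)))
                         (smul \<nu> ja + jmult \<alpha> ja jb + smul \<mu> jb);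
                   d = smul \<xi> s + smul (1/2) (jone \<alpha>) + smul (inverse \<xi>) t
               in primitive_axis_half (jmult \<alpha>) smul d"
  shows "let \<mu> = - (1 + \<zeta>) / 4; \<nu> = - (1 + inverse \<zeta>) / 4;
             s = smul (1 / (4 * (\<alpha> - 1)))
                   (smul \<mu> ja + jmult \<alpha> ja jb + smul \<nu> jb);
             t = smul (1 / (\<alpha> * (\<alpha> - 1)))
                   (smul \<nu> ja + jmult \<alpha> ja jb + smul \<mu> jb);
             d = smul \<xi> s + smul (1/2) (jone \<alpha>) + smul (inverse \<xi>) t
         in miyamoto (jmult \<alpha>) smul d s = smul (inverse \<xi> ^ 2) t
          \<and> miyamoto (jmult \<alpha>) smul d t = smul (\<xi> ^ 2) s"
proof -
  define \<mu> where "\<mu> = - (1 + \<zeta>) / 4"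
  define \<nu> where "\<nu> = - (1 + inverse \<zeta>) / 4"
  define s where "s = smul (1 / (4 * (\<alpha> - 1))) (smul \<mu> ja + jmult \<alpha> ja jb + smul \<nu> jb)"
  define t where "t = smul (1 / (\<alpha> * (\<alpha> - 1))) (smul \<nu> ja + jmult \<alpha> ja jb + smul \<mu> jb)"
  define d where "d = smul \<xi> s + smul (1/2) (jone \<alpha>) + smul (inverse \<xi>) t"
  have \<zeta>: "\<zeta> \<noteq> 0" "\<zeta> + inverse \<zeta> = 4 * \<alpha> - 2"
    using quadratic_root_add_inverse[OF root] by auto
  have s: "jmult \<alpha> s s = 0"
    unfolding s_def \<mu>_def \<nu>_def
    by (intro jmult_smul_self_eq_zero jmult_self_eq_zero_of_root char \<zeta>)
  have t: "jmult \<alpha> t t = 0"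
    using jmult_self_eq_zero_of_root[OF char, of "inverse \<zeta>" \<alpha>] \<zeta>
    unfolding t_def \<mu>_def \<nu>_def by (simp add: jmult_smul_self_eq_zero add.commute)
  have d: "primitive_axis_half (jmult \<alpha>) smul d"
    using axis unfolding Let_def d_def s_def t_def \<mu>_def \<nu>_def .
  have d_swap: "d = smul (inverse \<xi>) t + smul (1/2) (jone \<alpha>) + smul (inverse (inverse \<xi>)) s"
    by (simp add: d_def ac_simps)
  have "miyamoto (jmult \<alpha>) smul d s = smul (inverse \<xi> ^ 2) t"
    by (rule miyamoto_square_zero_pair[OF char a1 xi s t d_def d])
  moreover have "miyamoto (jmult \<alpha>) smul d t = smul (inverse (inverse \<xi>) ^ 2) s"
    using xi by (intro miyamoto_square_zero_pair[OF char a1 _ t s d_swap d]) simp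
  ultimately show ?thesis
    unfolding Let_def d_def s_def t_def \<mu>_def \<nu>_def by simp
qed

end
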